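(* For every integer $d\ge 0$, $$\frac14\sum_{\ell=0}^{\lfloor d/3\rfloor}\;\sum_{m=0}^{\lfloor (d-3\ell)/2\rfloor}(d-3\ell-2m+1)^2(m+1)^2(d-3\ell-m+2)^2=\binom{d+8}{d}.$$ *)

theory Defs
  imports Complex_Main
begin

end

theory Submission
  imports Defs
begin

text \<open>
  Write \<open>F n\<close> for the inner sum over \<open>m\<close> with \<open>d - 3\<ell>\<close> replaced by \<open>n\<close>. Its partial sums in
  \<open>m\<close> are a polynomial in \<open>n\<close> and the upper limit, so \<open>F\<close> is a quasi-polynomial of period 2.
  Evaluating it in both parities shows \<open>F (n + 3) = 4 (B (n + 3) - B n)\<close> and \<open>F n = 4 B n\<close> for
  \<open>n < 3\<close>, where \<open>B n = (n+8 choose 8)\<close>; the outer sum over \<open>\<ell>\<close> then telescopes.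
\<close>

lemma sum_step_telescope:
  fixes F G :: "nat \<Rightarrow> 'a::ab_group_add"
  assumes "k > 0"
    and initial: "\<And>n. n < k \<Longrightarrow> F n = G n"
    and step: "\<And>n. F (n + k) = G (n + k) - G n"
  shows "(\<Sum>l=0..d div k. F (d - k * l)) = G d"
proof (induction d rule: less_induct)
  case (less d)
  show ?case
  proof (cases "d < k")
    case True
    then show ?thesis using initial by simp
  next
    case False
    then obtain e where d: "d = e + k" by (metis add.commute le_add_diff_inverse not_less)
    have "d div k = Suc (e div k)" using d \<open>k > 0\<close> by simp
    then have "(\<Sum>l=0..d div k. F (d - k * l)) = F d + (\<Sum>l=0..e div k. F (d - k * Suc l))"
      unfolding \<open>d div k = _\<close> by (subst sum.atLeast0_atMost_Suc_shift) simp
    also have "(\<Sum>l=0..e div k. F (d - k * Suc l)) = (\<Sum>l=0..e div k. F (e - k * l))"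
      using d by simp
    also have "\<dots> = G e" using less d \<open>k > 0\<close> by simp
    finally show ?thesis using step[of e] d by simp
  qed
qed

definition binom8_poly :: "real \<Rightarrow> real" where
  "binom8_poly x = (x + 1) * (x + 2) * (x + 3) * (x + 4) * (x + 5) * (x + 6) * (x + 7) * (x + 8) / 40320"

lemma binomial_add8_eq_binom8_poly: "real ((d + 8) choose d) = binom8_poly (real d)"
proof (induction d)
  case 0
  then show ?case by (simp add: binom8_poly_def)
next
  case (Suc d)
  have "real (Suc d) * real ((Suc d + 8) choose Suc d) = real (Suc d + 8) * real ((d + 8) choose d)"
    using Suc_times_binomial[of d "d + 8"] by (metis add_Suc of_nat_mult)
  then have "real ((Suc d + 8) choose Suc d) = real (Suc d + 8) * binom8_poly (real d) / real (Suc d)"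
    using Suc by (simp add: field_simps)
  also have "\<dots> = binom8_poly (real (Suc d))"
    unfolding binom8_poly_def by (simp add: field_simps)
  finally show ?case .
qed

definition inner_term :: "real \<Rightarrow> real \<Rightarrow> real" where
  "inner_term x m = (x - 2 * m + 1)^2 * (m + 1)^2 * (x - m + 2)^2"

text \<open>Found by interpolating the partial sums at small values.\<close>
definition inner_partial_sum_poly :: "real \<Rightarrow> real \<Rightarrow> real" where
  "inner_partial_sum_poly x M = (840 - 484 * M + 2170 * M^3 - 966 * M^5 + 120 * M^7
     + 2520 * x - 546 * x * M - 3255 * x * M^2 + 2310 * x * M^3 + 2415 * x * M^4
     - 504 * x * M^5 - 420 * x * M^6
     + 2730 * x^2 + 1379 * x^2 * M - 3465 * x^2 * M^2 - 1400 * x^2 * M^3 + 1260 * x^2 * M^4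
     + 546 * x^2 * M^5
     + 1260 * x^3 + 1680 * x^3 * M - 315 * x^3 * M^2 - 1050 * x^3 * M^3 - 315 * x^3 * M^4
     + 210 * x^4 + 455 * x^4 * M + 315 * x^4 * M^2 + 70 * x^4 * M^3) / 210"

lemma sum_inner_term: "(\<Sum>m=0..M. inner_term x (real m)) = inner_partial_sum_poly x (real M)"
proof (induction M)
  case 0
  show ?case
    unfolding inner_term_def inner_partial_sum_poly_def
    by (simp add: power2_eq_square power3_eq_cube power4_eq_xxxx algebra_simps)
next
  case (Suc M)
  have "inner_partial_sum_poly x (1 + real M) = inner_partial_sum_poly x (real M) + inner_term x (1 + real M)"
    unfolding inner_partial_sum_poly_def inner_term_def by algebra
  then show ?case using Suc by simp
qed

definition inner_sum :: "nat \<Rightarrow> real" where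
  "inner_sum n = (\<Sum>m=0..n div 2. inner_term (real n) (real m))"

lemma inner_sum_eq_poly: "inner_sum n = inner_partial_sum_poly (real n) (real (n div 2))"
  unfolding inner_sum_def by (rule sum_inner_term)

lemma inner_sum_initial:
  assumes "n < 3"
  shows "inner_sum n = 4 * binom8_poly (real n)"
proof -
  have "n = 0 \<or> n = 1 \<or> n = 2" using assms by auto
  then show ?thesis by (auto simp: inner_sum_eq_poly inner_partial_sum_poly_def binom8_poly_def)
qed

lemma inner_sum_step: "inner_sum (n + 3) = 4 * binom8_poly (real (n + 3)) - 4 * binom8_poly (real n)"
proof (cases "even n")
  case True
  then obtain j where n: "n = 2 * j" by blast
  then have "(n + 3) div 2 = j + 1" by presburger
  then have "inner_sum (n + 3) = inner_partial_sum_poly (2 * real j + 3) (real j + 1)"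
    using n by (simp add: inner_sum_eq_poly add.commute)
  also have "\<dots> = 4 * binom8_poly (2 * real j + 3) - 4 * binom8_poly (2 * real j)"
    unfolding inner_partial_sum_poly_def binom8_poly_def by algebra
  finally show ?thesis using n by simp
next
  case False
  then obtain j where n: "n = 2 * j + 1" using oddE by blast
  then have "(n + 3) div 2 = j + 2" by presburger
  then have "inner_sum (n + 3) = inner_partial_sum_poly (2 * real j + 4) (real j + 2)"
    using n by (simp add: inner_sum_eq_poly add.commute)
  also have "\<dots> = 4 * binom8_poly (2 * real j + 4) - 4 * binom8_poly (2 * real j + 1)"
    unfolding inner_partial_sum_poly_def binom8_poly_def by algebra
  finally show ?thesis using n by (simp add: add.commute)
qed

theorem lemma5p7:
  fixes d :: nat
  shows "(1/4::real) * (\<Sum>l=0..d div 3. \<Sum>m=0..(d - 3*l) div 2.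
            (real d - 3 * real l - 2 * real m + 1)^2 * (real m + 1)^2
            * (real d - 3 * real l - real m + 2)^2)
         = real ((d + 8) choose d)"
proof -
  have "(\<Sum>l=0..d div 3. \<Sum>m=0..(d - 3*l) div 2.
            (real d - 3 * real l - 2 * real m + 1)^2 * (real m + 1)^2
            * (real d - 3 * real l - real m + 2)^2) = (\<Sum>l=0..d div 3. inner_sum (d - 3*l))"
    by (rule sum.cong) (auto simp: inner_sum_def inner_term_def of_nat_diff)
  also have "\<dots> = 4 * binom8_poly (real d)"
    by (rule sum_step_telescope) (simp_all add: inner_sum_initial inner_sum_step)
  finally show ?thesis by (simp add: binomial_add8_eq_binom8_poly)
qed

end
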